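(* There exists a universal constant $K>0$ such that the following holds. Let $q$ be a probability distribution on $[d]$, write $\gamma=\min\{q(j):j\in[d]\}$, and let $\theta\ge 0$. If $T\ge K\cdot\max\{\frac{\sqrt d}{\theta},\frac{1}{\sqrt{\theta\gamma}}\}$, then there is an algorithm which, given $c=2$ independent samples from each of (unknown) probability distributions $p_1,\dots,p_T$ on $[d]$ (all samples mutually independent), distinguishes with probability at least $0.99$ the case $\chi^2(p_{\mathrm{avg}}\,\|\,q)\le 0.99\,\theta$ from the case $\chi^2(p_{\mathrm{avg}}\,\|\,q)>\theta$, where $p_{\mathrm{avg}}=\frac1T\sum_{t=1}^Tp_t$.
   Context: $\chi^2(p\,\|\,q)=\sum_{j=1}^d\frac{(p(j)-q(j))^2}{q(j)}=\sum_{j=1}^d\frac{p(j)^2}{q(j)}-1$ is the $\chi^2$-divergence. "Distinguishes with probability at least $0.99$" means: the algorithm (which may depend on $d,q,\theta,T$ but not on the $p_t$) outputs accept/reject, accepting with probability at least $0.99$ in the first case and rejecting with probability at least $0.99$ in the second case. *)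

theory Defs
  imports Complex_Main "HOL-Library.FuncSet"
begin

text \<open>Domain [d] is represented as {0..<d}. A distribution on [d] is a function
  nat => real, nonnegative on {..<d}, summing to 1 over {..<d}.\<close>

definition is_dist :: "nat \<Rightarrow> (nat \<Rightarrow> real) \<Rightarrow> bool" where
  "is_dist d p \<longleftrightarrow> (\<forall>j<d. 0 \<le> p j) \<and> (\<Sum>j<d. p j) = 1"

definition chi2 :: "nat \<Rightarrow> (nat \<Rightarrow> real) \<Rightarrow> (nat \<Rightarrow> real) \<Rightarrow> real" where
  "chi2 d p q = (\<Sum>j<d. (p j - q j)^2 / q j)"

definition p_avg :: "nat \<Rightarrow> (nat \<Rightarrow> nat \<Rightarrow> real) \<Rightarrow> nat \<Rightarrow> real" where
  "p_avg T p j = (\<Sum>t<T. p t j) / real T"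

text \<open>Sample outcomes: s t i is the i-th sample (i < c) drawn from p t (t < T).\<close>
definition sample_space :: "nat \<Rightarrow> nat \<Rightarrow> nat \<Rightarrow> (nat \<Rightarrow> nat \<Rightarrow> nat) set" where
  "sample_space d T c = (\<Pi>\<^sub>E t\<in>{..<T}. \<Pi>\<^sub>E i\<in>{..<c}. {..<d})"

definition sample_prob :: "nat \<Rightarrow> nat \<Rightarrow> (nat \<Rightarrow> nat \<Rightarrow> real) \<Rightarrow> (nat \<Rightarrow> nat \<Rightarrow> nat) \<Rightarrow> real" where
  "sample_prob T c p s = (\<Prod>t<T. \<Prod>i<c. p t (s t i))"

text \<open>A (possibly randomized) algorithm is given by A s \<in> [0,1], the probability of
  accepting on outcome s; its overall acceptance probability:\<close>
definition accept_prob :: "nat \<Rightarrow> nat \<Rightarrow> nat \<Rightarrow> (nat \<Rightarrow> nat \<Rightarrow> real) \<Rightarrow> ((nat \<Rightarrow> nat \<Rightarrow> nat) \<Rightarrow> real) \<Rightarrow> real" where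
  "accept_prob d T c p A = (\<Sum>s\<in>sample_space d T c. sample_prob T c p s * A s)"

end

theory Submission
  imports Defs "HOL-Analysis.Convex"
begin

text \<open>Split the two samples drawn from each \<open>p\<^sub>t\<close> into two independent batches with empirical
  frequencies \<open>X\<close> and \<open>Y\<close>, and threshold the statistic \<open>Z = \<Sum>\<^sub>j X\<^sub>j Y\<^sub>j / q\<^sub>j\<close>.
  By independence of the batches, \<open>E Z = \<Sum>\<^sub>j P\<^sub>j\<^sup>2 / q\<^sub>j = 1 + \<chi>\<^sup>2(P \<parallel> q)\<close> for \<open>P = p_avg\<close>,
  and the variance of \<open>Z\<close> is governed by the covariances of the frequencies, which are \<open>O(1/T)\<close>.
  Bounding the relative deviations \<open>(P\<^sub>j - q\<^sub>j)/q\<^sub>j\<close> by \<open>\<surd>(\<chi>\<^sup>2/\<gamma>)\<close> gives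
  \<open>Var Z \<le> 2\<chi>\<^sup>2(1 + \<surd>(\<chi>\<^sup>2/\<gamma>))/T + 4(d + \<chi>\<^sup>2/\<gamma>)/T\<^sup>2\<close>, which the sample-size hypothesis
  turns into \<open>Var Z \<le> 4(\<chi>\<^sup>2 + \<theta>)\<^sup>2/K\<close>. Chebyshev's inequality at the threshold \<open>1 + 0.995\<theta>\<close>
  then separates \<open>\<chi>\<^sup>2 \<le> 0.99\<theta>\<close> from \<open>\<chi>\<^sup>2 > \<theta>\<close>.\<close>

section \<open>Independent draws\<close>

definition expect_draw :: "nat \<Rightarrow> nat \<Rightarrow> (nat \<Rightarrow> nat \<Rightarrow> real) \<Rightarrow> ((nat \<Rightarrow> nat) \<Rightarrow> real) \<Rightarrow> real" where
  "expect_draw d T p f = (\<Sum>x\<in>{..<T} \<rightarrow>\<^sub>E {..<d}. (\<Prod>t<T. p t (x t)) * f x)"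

lemma expect_draw_prod:
  "expect_draw d T p (\<lambda>x. \<Prod>t<T. g t (x t)) = (\<Prod>t<T. \<Sum>k<d. p t k * g t k)"
  unfolding expect_draw_def by (subst prod_sum_PiE) (auto simp: prod.distrib)

lemma expect_draw_add: "expect_draw d T p (\<lambda>x. f x + g x) = expect_draw d T p f + expect_draw d T p g"
  unfolding expect_draw_def by (simp add: distrib_left sum.distrib)

lemma expect_draw_diff: "expect_draw d T p (\<lambda>x. f x - g x) = expect_draw d T p f - expect_draw d T p g"
  unfolding expect_draw_def by (simp add: right_diff_distrib sum_subtractf)

lemma expect_draw_cmult: "expect_draw d T p (\<lambda>x. c * f x) = c * expect_draw d T p f"
  unfolding expect_draw_def sum_distrib_left by (intro sum.cong) (auto simp: mult_ac)

lemma expect_draw_divide: "expect_draw d T p (\<lambda>x. f x / c) = expect_draw d T p f / c"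
  using expect_draw_cmult[of d T p "1/c" f] by simp

lemma expect_draw_sum: "expect_draw d T p (\<lambda>x. \<Sum>i\<in>I. f i x) = (\<Sum>i\<in>I. expect_draw d T p (f i))"
  unfolding expect_draw_def by (simp add: sum_distrib_left sum.swap[of _ I])

lemma expect_draw_mono:
  assumes "\<forall>t<T. is_dist d (p t)" "\<And>x. f x \<le> g x"
  shows "expect_draw d T p f \<le> expect_draw d T p g"
  unfolding expect_draw_def
proof (rule sum_mono)
  fix x assume "x \<in> {..<T} \<rightarrow>\<^sub>E {..<d}"
  then have "0 \<le> (\<Prod>t<T. p t (x t))"
    using assms(1) by (intro prod_nonneg) (auto simp: is_dist_def)
  then show "(\<Prod>t<T. p t (x t)) * f x \<le> (\<Prod>t<T. p t (x t)) * g x"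
    using assms(2) by (simp add: mult_left_mono)
qed

lemma expect_draw_const:
  assumes "\<forall>t<T. is_dist d (p t)"
  shows "expect_draw d T p (\<lambda>_. c) = c"
  using expect_draw_prod[of d T p "\<lambda>_ _. 1"] expect_draw_cmult[of d T p c "\<lambda>_. 1"] assms
  by (simp add: is_dist_def)

lemma expect_draw_coord:
  assumes "\<forall>t<T. is_dist d (p t)" "t0 < T"
  shows "expect_draw d T p (\<lambda>x. f (x t0)) = (\<Sum>k<d. p t0 k * f k)"
proof -
  let ?h = "\<lambda>t k. if t = t0 then f k else 1"
  have one_factor: "(\<Prod>t<T. if t = t0 then a else 1) = a" for a :: real
    using assms(2) by simp
  have "(\<Prod>t<T. ?h t (x t)) = f (x t0)" for x
    using one_factor[of "f (x t0)"] by (simp cong: prod.cong if_cong)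
  moreover have "(\<Prod>t<T. \<Sum>k<d. p t k * ?h t k) = (\<Sum>k<d. p t0 k * f k)"
    using assms(1) by (subst one_factor[symmetric], intro prod.cong) (auto simp: is_dist_def)
  ultimately show ?thesis using expect_draw_prod[of d T p ?h] by simp
qed

lemma expect_draw_coord_pair:
  assumes "\<forall>t<T. is_dist d (p t)" "t0 < T" "t1 < T" "t0 \<noteq> t1"
  shows "expect_draw d T p (\<lambda>x. f (x t0) * g (x t1)) = (\<Sum>k<d. p t0 k * f k) * (\<Sum>k<d. p t1 k * g k)"
proof -
  let ?h = "\<lambda>t k. if t = t0 then f k else if t = t1 then g k else 1"
  have two_factors: "(\<Prod>t<T. if t = t0 then a else if t = t1 then b else 1) = a * b" for a b :: real
    using assms(2-4) by (simp add: prod.If_cases Int_absorb1 Diff_Int_distrib2 insert_Diff_if)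
  have "(\<Prod>t<T. ?h t (x t)) = f (x t0) * g (x t1)" for x
    using two_factors[of "f (x t0)" "g (x t1)"] by (simp cong: prod.cong if_cong)
  moreover have "(\<Prod>t<T. \<Sum>k<d. p t k * ?h t k) = (\<Sum>k<d. p t0 k * f k) * (\<Sum>k<d. p t1 k * g k)"
    using assms(1) by (subst two_factors[symmetric], intro prod.cong) (auto simp: is_dist_def)
  ultimately show ?thesis using expect_draw_prod[of d T p ?h] by simp
qed

section \<open>Empirical frequencies\<close>

definition indicator_cov :: "(nat \<Rightarrow> real) \<Rightarrow> nat \<Rightarrow> nat \<Rightarrow> real" where
  "indicator_cov p j k = (if j = k then p j else 0) - p j * p k"

lemma sum_mult_of_bool_eq:
  fixes f :: "nat \<Rightarrow> real"
  assumes "j < d"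
  shows "(\<Sum>k<d. f k * of_bool (k = j)) = f j"
  using assms by (simp add: of_bool_def if_distrib[of "\<lambda>b. f _ * b"] sum.delta' cong: if_cong)

lemma expect_draw_indicator:
  assumes "\<forall>t<T. is_dist d (p t)" "t < T" "j < d"
  shows "expect_draw d T p (\<lambda>x. of_bool (x t = j)) = p t j"
  using expect_draw_coord[OF assms(1,2), of "\<lambda>l. of_bool (l = j)"] assms(3)
  by (simp add: sum_mult_of_bool_eq)

lemma expect_draw_indicator_pair:
  assumes "\<forall>t<T. is_dist d (p t)" "t < T" "s < T" "j < d" "k < d"
  shows "expect_draw d T p (\<lambda>x. of_bool (x t = j) * of_bool (x s = k))
       = p t j * p s k + (if t = s then indicator_cov (p t) j k else 0)"
proof (cases "t = s")
  case True
  have "expect_draw d T p (\<lambda>x. of_bool (x t = j) * of_bool (x t = k))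
      = (\<Sum>l<d. p t l * of_bool (l = j) * of_bool (l = k))"
    using expect_draw_coord[OF assms(1,2), of "\<lambda>l. of_bool (l = j) * of_bool (l = k)"]
    by (simp add: mult.assoc)
  also have "\<dots> = of_bool (j = k) * p t j"
    using sum_mult_of_bool_eq[OF assms(4), of "\<lambda>l. p t l * of_bool (l = k)"] by auto
  finally show ?thesis using True by (simp add: indicator_cov_def)
next
  case False
  then show ?thesis
    using expect_draw_coord_pair[OF assms(1-3) False, of "\<lambda>l. of_bool (l = j)" "\<lambda>l. of_bool (l = k)"]
      assms(4,5)
    by (simp add: sum_mult_of_bool_eq)
qed

definition emp_freq :: "nat \<Rightarrow> (nat \<Rightarrow> nat) \<Rightarrow> nat \<Rightarrow> real" where
  "emp_freq T x j = card {t. t < T \<and> x t = j} / real T"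

lemma emp_freq_eq_sum: "emp_freq T x j = (\<Sum>t<T. of_bool (x t = j)) / real T"
  by (simp add: emp_freq_def Int_def lessThan_def)

definition freq_cov :: "nat \<Rightarrow> (nat \<Rightarrow> nat \<Rightarrow> real) \<Rightarrow> nat \<Rightarrow> nat \<Rightarrow> real" where
  "freq_cov T p j k = (\<Sum>t<T. indicator_cov (p t) j k) / (real T)^2"

lemma expect_emp_freq:
  assumes "\<forall>t<T. is_dist d (p t)" "j < d"
  shows "expect_draw d T p (\<lambda>x. emp_freq T x j) = p_avg T p j"
  using assms unfolding emp_freq_eq_sum p_avg_def expect_draw_divide expect_draw_sum
  by (simp add: expect_draw_indicator)

lemma expect_emp_freq_mult:
  assumes "\<forall>t<T. is_dist d (p t)" "j < d" "k < d"
  shows "expect_draw d T p (\<lambda>x. emp_freq T x j * emp_freq T x k)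
       = p_avg T p j * p_avg T p k + freq_cov T p j k"
proof -
  have "emp_freq T x j * emp_freq T x k
      = (\<Sum>t<T. \<Sum>s<T. of_bool (x t = j) * of_bool (x s = k)) / (real T)^2" for x
    unfolding emp_freq_eq_sum by (simp add: sum_product power2_eq_square del: sum_of_bool_eq)
  then have "expect_draw d T p (\<lambda>x. emp_freq T x j * emp_freq T x k)
      = (\<Sum>t<T. \<Sum>s<T. expect_draw d T p (\<lambda>x. of_bool (x t = j) * of_bool (x s = k))) / (real T)^2"
    by (simp only: expect_draw_divide expect_draw_sum)
  also have "\<dots> = (\<Sum>t<T. \<Sum>s<T. p t j * p s k + (if t = s then indicator_cov (p t) j k else 0)) / (real T)^2"
    using assms by (intro arg_cong2[where f = divide] sum.cong refl) (simp_all add: expect_draw_indicator_pair)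
  also have "\<dots> = p_avg T p j * p_avg T p k + freq_cov T p j k"
    by (simp add: sum.distrib sum_product p_avg_def freq_cov_def add_divide_distrib power2_eq_square)
  finally show ?thesis .
qed

section \<open>The collision statistic\<close>

definition expect_pair :: "nat \<Rightarrow> nat \<Rightarrow> (nat \<Rightarrow> nat \<Rightarrow> real) \<Rightarrow> ((nat \<Rightarrow> nat) \<Rightarrow> (nat \<Rightarrow> nat) \<Rightarrow> real) \<Rightarrow> real" where
  "expect_pair d T p F = expect_draw d T p (\<lambda>x. expect_draw d T p (\<lambda>y. F x y))"

lemma expect_pair_mult:
  "expect_pair d T p (\<lambda>x y. f x * g y) = expect_draw d T p f * expect_draw d T p g"
  unfolding expect_pair_def expect_draw_cmult
  using expect_draw_cmult[of d T p "expect_draw d T p g" f] by (simp add: mult.commute)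

lemma expect_pair_mono:
  assumes "\<forall>t<T. is_dist d (p t)" "\<And>x y. F x y \<le> G x y"
  shows "expect_pair d T p F \<le> expect_pair d T p G"
  unfolding expect_pair_def using assms by (intro expect_draw_mono) auto

lemma expect_pair_of_bool_not:
  assumes "\<forall>t<T. is_dist d (p t)"
  shows "expect_pair d T p (\<lambda>x y. of_bool (\<not> P x y)) = 1 - expect_pair d T p (\<lambda>x y. of_bool (P x y))"
proof -
  have "of_bool (\<not> P x y) = 1 - (of_bool (P x y) :: real)" for x y by simp
  then show ?thesis
    unfolding expect_pair_def by (simp only: expect_draw_diff expect_draw_const[OF assms])
qed

lemma expect_pair_chebyshev:
  assumes "\<forall>t<T. is_dist d (p t)" "0 < a" "\<And>x y. E x y \<Longrightarrow> a \<le> \<bar>Z x y - \<mu>\<bar>"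
  shows "expect_pair d T p (\<lambda>x y. of_bool (E x y)) \<le> expect_pair d T p (\<lambda>x y. (Z x y - \<mu>)^2) / a^2"
proof -
  have "of_bool (E x y) \<le> (Z x y - \<mu>)^2 / a^2" for x y
  proof (cases "E x y")
    case True
    then have "a^2 \<le> (Z x y - \<mu>)^2"
      using assms(2,3) by (metis abs_le_square_iff abs_of_pos)
    then show ?thesis using True assms(2) by simp
  qed simp
  then have "expect_pair d T p (\<lambda>x y. of_bool (E x y)) \<le> expect_pair d T p (\<lambda>x y. (Z x y - \<mu>)^2 / a^2)"
    by (rule expect_pair_mono[OF assms(1)])
  then show ?thesis
    unfolding expect_pair_def by (simp only: expect_draw_divide)
qed

definition collision_stat :: "nat \<Rightarrow> nat \<Rightarrow> (nat \<Rightarrow> real) \<Rightarrow> (nat \<Rightarrow> nat) \<Rightarrow> (nat \<Rightarrow> nat) \<Rightarrow> real" where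
  "collision_stat d T q x y = (\<Sum>j<d. emp_freq T x j * emp_freq T y j / q j)"

lemma expect_collision_stat:
  assumes "\<forall>t<T. is_dist d (p t)"
  shows "expect_pair d T p (collision_stat d T q) = (\<Sum>j<d. (p_avg T p j)^2 / q j)"
proof -
  have "expect_pair d T p (collision_stat d T q)
      = (\<Sum>j<d. expect_pair d T p (\<lambda>x y. emp_freq T x j * emp_freq T y j) / q j)"
    unfolding expect_pair_def collision_stat_def by (simp only: expect_draw_sum expect_draw_divide)
  then show ?thesis
    using assms by (simp add: expect_pair_mult expect_emp_freq power2_eq_square)
qed

lemma expect_collision_stat_sq:
  assumes "\<forall>t<T. is_dist d (p t)"
  shows "expect_pair d T p (\<lambda>x y. (collision_stat d T q x y)^2)
       = (\<Sum>j<d. \<Sum>k<d. (p_avg T p j * p_avg T p k + freq_cov T p j k)^2 / (q j * q k))"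
proof -
  have "(collision_stat d T q x y)^2
      = (\<Sum>j<d. \<Sum>k<d. (emp_freq T x j * emp_freq T x k) * (emp_freq T y j * emp_freq T y k) / (q j * q k))"
    for x y
    unfolding collision_stat_def power2_eq_square sum_product by (simp add: ac_simps)
  then have "expect_pair d T p (\<lambda>x y. (collision_stat d T q x y)^2)
      = (\<Sum>j<d. \<Sum>k<d. expect_pair d T p (\<lambda>x y. (emp_freq T x j * emp_freq T x k) * (emp_freq T y j * emp_freq T y k)) / (q j * q k))"
    unfolding expect_pair_def by (simp only: expect_draw_sum expect_draw_divide)
  then show ?thesis
    using assms by (simp add: expect_pair_mult expect_emp_freq_mult power2_eq_square)
qed

lemma collision_stat_variance:
  fixes q :: "nat \<Rightarrow> real"
  assumes "\<forall>t<T. is_dist d (p t)"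
  defines "\<mu> \<equiv> \<Sum>j<d. (p_avg T p j)^2 / q j"
  shows "expect_pair d T p (\<lambda>x y. (collision_stat d T q x y - \<mu>)^2)
       = 2 * (\<Sum>j<d. \<Sum>k<d. (p_avg T p j / q j) * (p_avg T p k / q k) * freq_cov T p j k)
         + (\<Sum>j<d. \<Sum>k<d. (freq_cov T p j k)^2 / (q j * q k))"
proof -
  let ?P = "p_avg T p" and ?C = "freq_cov T p"
  have "(collision_stat d T q x y - \<mu>)^2 = (collision_stat d T q x y)^2 - 2 * \<mu> * collision_stat d T q x y + \<mu>^2"
    for x y by (simp add: power2_diff)
  then have "expect_pair d T p (\<lambda>x y. (collision_stat d T q x y - \<mu>)^2)
      = expect_pair d T p (\<lambda>x y. (collision_stat d T q x y)^2)
        - 2 * \<mu> * expect_pair d T p (collision_stat d T q) + \<mu>^2"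
    unfolding expect_pair_def
    by (simp only: expect_draw_add expect_draw_diff expect_draw_cmult expect_draw_const[OF assms(1)])
  also have "\<dots> = (\<Sum>j<d. \<Sum>k<d. (?P j * ?P k + ?C j k)^2 / (q j * q k)) - \<mu>^2"
    using expect_collision_stat_sq[OF assms(1)] expect_collision_stat[OF assms(1)]
    by (simp add: \<mu>_def power2_eq_square)
  also have "\<mu>^2 = (\<Sum>j<d. \<Sum>k<d. (?P j)^2 * (?P k)^2 / (q j * q k))"
    unfolding \<mu>_def power2_eq_square[of "sum _ _"] sum_product by simp
  also have "(\<Sum>j<d. \<Sum>k<d. (?P j * ?P k + ?C j k)^2 / (q j * q k)) - \<dots>
      = (\<Sum>j<d. \<Sum>k<d. 2 * ((?P j / q j) * (?P k / q k) * ?C j k) + (?C j k)^2 / (q j * q k))"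
    unfolding sum_subtractf[symmetric]
    by (intro sum.cong refl) (simp add: power2_eq_square algebra_simps add_divide_distrib diff_divide_distrib)
  finally show ?thesis
    by (simp only: sum.distrib sum_distrib_left)
qed

section \<open>Covariance bounds\<close>

lemma variance_le_sq_dev:
  fixes r :: "nat \<Rightarrow> real"
  assumes "is_dist d p"
  shows "(\<Sum>j<d. p j * (r j)^2) - (\<Sum>j<d. p j * r j)^2 \<le> (\<Sum>j<d. p j * (r j - a)^2)"
proof -
  have "(\<Sum>j<d. p j * (r j - a)^2) = (\<Sum>j<d. p j * (r j)^2) - 2 * a * (\<Sum>j<d. p j * r j) + a^2"
    using assms by (simp add: is_dist_def power2_diff algebra_simps sum.distrib sum_subtractf
        sum_distrib_left flip: sum_distrib_right)
  moreover have "0 \<le> ((\<Sum>j<d. p j * r j) - a)^2" by simp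
  moreover have "((\<Sum>j<d. p j * r j) - a)^2 = (\<Sum>j<d. p j * r j)^2 - 2 * a * (\<Sum>j<d. p j * r j) + a^2"
    by (simp add: power2_diff)
  ultimately show ?thesis by linarith
qed

lemma indicator_cov_quadratic_form:
  "(\<Sum>j<d. \<Sum>k<d. r j * r k * indicator_cov p j k) = (\<Sum>j<d. p j * (r j)^2) - (\<Sum>j<d. p j * r j)^2"
  by (simp add: indicator_cov_def algebra_simps sum_subtractf power2_eq_square sum_product
      if_distrib[of "\<lambda>x. _ * x"] cong: if_cong)

lemma indicator_cov_inner_le:
  assumes "is_dist d p" "is_dist d p'"
  shows "(\<Sum>j<d. \<Sum>k<d. indicator_cov p j k * indicator_cov p' j k / (q j * q k))
       \<le> 2 * (\<Sum>j<d. p j * p' j / (q j)^2)"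
proof -
  let ?w = "\<lambda>j. p j * p' j / (q j)^2"
  have nonneg: "0 \<le> p j" "0 \<le> p' j" if "j < d" for j
    using assms that by (auto simp: is_dist_def)
  have le1: "p' j \<le> 1" if "j < d" for j
    using member_le_sum[of j "{..<d}" p'] nonneg assms(2) that by (auto simp: is_dist_def)
  have "indicator_cov p j k * indicator_cov p' j k / (q j * q k)
      = (if j = k then ?w j * (1 - p j - p' j) else 0) + (p j * p' j / q j) * (p k * p' k / q k)" for j k
    by (cases "j = k") (simp_all add: indicator_cov_def power2_eq_square algebra_simps
        add_divide_distrib diff_divide_distrib)
  then have "(\<Sum>j<d. \<Sum>k<d. indicator_cov p j k * indicator_cov p' j k / (q j * q k))
      = (\<Sum>j<d. ?w j * (1 - p j - p' j)) + (\<Sum>j<d. p j * p' j / q j)^2"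
    by (simp add: sum.distrib power2_eq_square sum_product)
  also have "(\<Sum>j<d. ?w j * (1 - p j - p' j)) \<le> (\<Sum>j<d. ?w j)"
  proof (rule sum_mono)
    fix j assume "j \<in> {..<d}"
    with nonneg[of j] show "?w j * (1 - p j - p' j) \<le> ?w j" by (intro mult_left_le) auto
  qed
  also have "(\<Sum>j<d. p j * p' j / q j)^2 = (\<Sum>j<d. (sqrt (p j * p' j) / q j) * sqrt (p j * p' j))^2"
    using nonneg by (intro arg_cong[where f = "\<lambda>x. x^2"] sum.cong) (auto simp: field_simps)
  also have "\<dots> \<le> (\<Sum>j<d. ?w j) * (\<Sum>j<d. p j * p' j)"
    using Cauchy_Schwarz_ineq_sum[of "\<lambda>j. sqrt (p j * p' j) / q j" "\<lambda>j. sqrt (p j * p' j)" "{..<d}"]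
      nonneg by (simp add: power_divide)
  also have "\<dots> \<le> (\<Sum>j<d. ?w j) * 1"
  proof (rule mult_left_mono)
    have "(\<Sum>j<d. p j * p' j) \<le> (\<Sum>j<d. p j)"
      using nonneg le1 by (intro sum_mono) (simp add: mult_left_le)
    then show "(\<Sum>j<d. p j * p' j) \<le> 1" using assms(1) by (simp add: is_dist_def)
  qed (use nonneg in \<open>auto intro: sum_nonneg\<close>)
  finally show ?thesis by simp
qed

lemma freq_cov_quadratic_form_le:
  assumes "\<forall>t<T. is_dist d (p t)"
  shows "(\<Sum>j<d. \<Sum>k<d. r j * r k * freq_cov T p j k) \<le> (\<Sum>j<d. p_avg T p j * (r j - a)^2) / real T"
proof -
  have "(\<Sum>j<d. \<Sum>k<d. r j * r k * freq_cov T p j k)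
      = (\<Sum>j<d. \<Sum>k<d. \<Sum>t<T. r j * r k * indicator_cov (p t) j k) / (real T)^2"
    unfolding freq_cov_def by (simp add: sum_distrib_left sum_divide_distrib)
  also have "\<dots> = (\<Sum>t<T. \<Sum>j<d. \<Sum>k<d. r j * r k * indicator_cov (p t) j k) / (real T)^2"
    by (simp only: sum.swap[where B = "{..<T}"])
  also have "\<dots> \<le> (\<Sum>t<T. \<Sum>j<d. p t j * (r j - a)^2) / (real T)^2"
    using assms by (intro divide_right_mono sum_mono[where K = "{..<T}"])
      (simp_all add: indicator_cov_quadratic_form variance_le_sq_dev)
  also have "\<dots> = (\<Sum>j<d. p_avg T p j * (r j - a)^2) / real T"
    by (simp add: p_avg_def sum_distrib_right sum_divide_distrib power2_eq_square
        sum.swap[where A = "{..<d}" and B = "{..<T}"])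
  finally show ?thesis .
qed

lemma freq_cov_sq_le:
  assumes "\<forall>t<T. is_dist d (p t)"
  shows "(\<Sum>j<d. \<Sum>k<d. (freq_cov T p j k)^2 / (q j * q k))
       \<le> 2 * (\<Sum>j<d. (p_avg T p j / q j)^2) / (real T)^2"
proof -
  let ?cov = "\<lambda>t. indicator_cov (p t)"
  have "(freq_cov T p j k)^2 = (\<Sum>t<T. \<Sum>s<T. ?cov t j k * ?cov s j k) / (real T)^4" for j k
    by (simp add: freq_cov_def power_divide power2_eq_square sum_product power4_eq_xxxx)
  then have "(\<Sum>j<d. \<Sum>k<d. (freq_cov T p j k)^2 / (q j * q k))
      = (\<Sum>j<d. \<Sum>k<d. \<Sum>t<T. \<Sum>s<T. ?cov t j k * ?cov s j k / (q j * q k)) / (real T)^4"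
    by (simp add: sum_divide_distrib ac_simps)
  also have "\<dots> = (\<Sum>t<T. \<Sum>s<T. \<Sum>j<d. \<Sum>k<d. ?cov t j k * ?cov s j k / (q j * q k)) / (real T)^4"
    by (simp only: sum.swap[where A = "{..<d}" and B = "{..<T}"])
  also have "\<dots> \<le> (\<Sum>t<T. \<Sum>s<T. 2 * (\<Sum>j<d. p t j * p s j / (q j)^2)) / (real T)^4"
    using assms by (intro divide_right_mono sum_mono[where K = "{..<T}"]) (simp_all add: indicator_cov_inner_le)
  also have "\<dots> = 2 * (\<Sum>j<d. (\<Sum>t<T. p t j) * (\<Sum>s<T. p s j) / (q j)^2) / (real T)^4"
  proof -
    have "(\<Sum>j<d. (\<Sum>t<T. p t j) * (\<Sum>s<T. p s j) / (q j)^2)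
        = (\<Sum>t<T. \<Sum>s<T. \<Sum>j<d. p t j * p s j / (q j)^2)"
      by (simp only: sum_product sum_divide_distrib sum.swap[where A = "{..<d}" and B = "{..<T}"])
    then show ?thesis by (simp add: sum_distrib_left)
  qed
  also have "\<dots> = 2 * (\<Sum>j<d. (p_avg T p j / q j)^2) / (real T)^2"
  proof -
    have avg_sq: "(p_avg T p j / q j)^2 = (\<Sum>t<T. p t j) * (\<Sum>s<T. p s j) / (q j)^2 / (real T)^2" for j
      by (simp add: p_avg_def power2_eq_square)
    show ?thesis
      by (simp only: avg_sq flip: sum_divide_distrib) (simp add: power4_eq_xxxx power2_eq_square)
  qed
  finally show ?thesis .
qed

section \<open>Variance bound in terms of the chi-square divergence\<close>

lemma is_dist_dim_pos: "is_dist d q \<Longrightarrow> 0 < d"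
  by (cases d) (simp_all add: is_dist_def)

lemma is_dist_p_avg:
  assumes "\<forall>t<T. is_dist d (p t)" "0 < T"
  shows "is_dist d (p_avg T p)"
proof -
  have "(\<Sum>j<d. p_avg T p j) = (\<Sum>t<T. \<Sum>j<d. p t j) / real T"
    unfolding p_avg_def by (simp add: sum.swap[of _ "{..<T}"] flip: sum_divide_distrib)
  then show ?thesis
    using assms by (auto simp: is_dist_def p_avg_def intro!: divide_nonneg_nonneg sum_nonneg)
qed

lemma sum_sq_div_eq_chi2:
  assumes "is_dist d P" "is_dist d q" "\<forall>j<d. 0 < q j"
  shows "(\<Sum>j<d. (P j)^2 / q j) = 1 + chi2 d P q"
proof -
  have "chi2 d P q = (\<Sum>j<d. (P j)^2 / q j - 2 * P j + q j)"
    unfolding chi2_def using assms(3) by (intro sum.cong) (auto simp: field_simps power2_eq_square)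
  then show ?thesis
    using assms(1,2) by (simp add: sum.distrib sum_subtractf is_dist_def flip: sum_distrib_left)
qed

lemma chi2_nonneg: "\<forall>j<d. 0 \<le> q j \<Longrightarrow> 0 \<le> chi2 d P q"
  unfolding chi2_def by (intro sum_nonneg) auto

lemma relative_dev_sq_le_chi2:
  assumes "\<forall>j<d. g \<le> q j" "0 < g" "j < d"
  shows "((P j - q j) / q j)^2 \<le> chi2 d P q / g"
proof -
  have q: "0 < q j" "g \<le> q j" using assms by (auto intro: less_le_trans)
  have "g * ((P j - q j) / q j)^2 \<le> q j * ((P j - q j) / q j)^2"
    using q by (intro mult_right_mono) auto
  also have "\<dots> = (P j - q j)^2 / q j"
    using q by (simp add: power2_eq_square)
  also have "\<dots> \<le> chi2 d P q"
    unfolding chi2_def using assms by (intro member_le_sum) (auto intro: order.trans[OF less_imp_le])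
  finally show ?thesis
    using assms(2) by (simp add: pos_le_divide_eq mult.commute)
qed

lemma weighted_relative_dev_le_chi2:
  assumes "\<forall>j<d. g \<le> q j" "0 < g"
  shows "(\<Sum>j<d. P j * (P j / q j - 1)^2) \<le> chi2 d P q * (1 + sqrt (chi2 d P q / g))"
proof -
  have "P j * (P j / q j - 1)^2 \<le> (P j - q j)^2 / q j * (1 + sqrt (chi2 d P q / g))" if "j < d" for j
  proof -
    let ?\<delta> = "(P j - q j) / q j"
    have q: "0 < q j" using assms that by (auto intro: less_le_trans)
    have eq: "P j * (P j / q j - 1)^2 = (P j - q j)^2 / q j * (1 + ?\<delta>)"
      using q by (simp add: field_simps power2_eq_square)
    have "?\<delta> \<le> sqrt (?\<delta>^2)" by (metis abs_ge_self real_sqrt_abs)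
    also have "\<dots> \<le> sqrt (chi2 d P q / g)"
      using relative_dev_sq_le_chi2[OF assms that] by (rule real_sqrt_le_mono)
    finally show ?thesis
      unfolding eq using q by (intro mult_left_mono) auto
  qed
  then have "(\<Sum>j<d. P j * (P j / q j - 1)^2) \<le> (\<Sum>j<d. (P j - q j)^2 / q j * (1 + sqrt (chi2 d P q / g)))"
    by (intro sum_mono) auto
  then show ?thesis by (simp add: chi2_def sum_distrib_right)
qed

lemma sum_ratio_sq_le_chi2:
  assumes "\<forall>j<d. g \<le> q j" "0 < g"
  shows "(\<Sum>j<d. (P j / q j)^2) \<le> 2 * real d + 2 * (chi2 d P q / g)"
proof -
  have "(P j / q j)^2 \<le> 2 + 2 * ((P j - q j)^2 / q j / g)" if "j < d" for j
  proof -
    let ?\<delta> = "(P j - q j) / q j"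
    have q: "0 < q j" "g \<le> q j" using assms that by (auto intro: less_le_trans)
    have "(P j / q j)^2 = (1 + ?\<delta>)^2" using q by (simp add: field_simps)
    also have "\<dots> \<le> 2 + 2 * ?\<delta>^2"
      using power2_diff[of 1 ?\<delta>] zero_le_power2[of "1 - ?\<delta>"] by (simp add: power2_sum)
    also have "?\<delta>^2 \<le> (P j - q j)^2 / q j / g"
    proof -
      have "g * ?\<delta>^2 \<le> q j * ?\<delta>^2" using q by (intro mult_right_mono) auto
      then show ?thesis using q assms(2) by (simp add: pos_le_divide_eq power2_eq_square mult.commute)
    qed
    finally show ?thesis by simp
  qed
  then have "(\<Sum>j<d. (P j / q j)^2) \<le> (\<Sum>j<d. 2 + 2 * ((P j - q j)^2 / q j / g))"
    by (intro sum_mono) auto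
  then show ?thesis by (simp add: chi2_def sum.distrib sum_divide_distrib sum_distrib_left)
qed

lemma collision_stat_variance_le:
  assumes "\<forall>t<T. is_dist d (p t)" "0 < T" "is_dist d q" "\<forall>j<d. g \<le> q j" "0 < g"
  defines "c \<equiv> chi2 d (p_avg T p) q"
  shows "expect_pair d T p (\<lambda>x y. (collision_stat d T q x y - (1 + c))^2)
       \<le> 2 * (c * (1 + sqrt (c / g))) / real T + 2 * (2 * real d + 2 * (c / g)) / (real T)^2"
proof -
  let ?P = "p_avg T p" and ?C = "freq_cov T p"
  have "\<forall>j<d. 0 < q j" using assms(4,5) by (auto intro: less_le_trans)
  then have "(\<Sum>j<d. (?P j)^2 / q j) = 1 + c"
    unfolding c_def using assms(1-3) by (intro sum_sq_div_eq_chi2 is_dist_p_avg) auto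
  then have variance: "expect_pair d T p (\<lambda>x y. (collision_stat d T q x y - (1 + c))^2)
      = 2 * (\<Sum>j<d. \<Sum>k<d. (?P j / q j) * (?P k / q k) * ?C j k) + (\<Sum>j<d. \<Sum>k<d. (?C j k)^2 / (q j * q k))"
    using collision_stat_variance[OF assms(1), of q] by simp
  have "(\<Sum>j<d. \<Sum>k<d. (?P j / q j) * (?P k / q k) * ?C j k) \<le> (\<Sum>j<d. ?P j * (?P j / q j - 1)^2) / real T"
    by (rule freq_cov_quadratic_form_le[OF assms(1)])
  also have "\<dots> \<le> c * (1 + sqrt (c / g)) / real T"
    unfolding c_def by (intro divide_right_mono weighted_relative_dev_le_chi2 assms(4,5)) simp
  finally have linear_part: "(\<Sum>j<d. \<Sum>k<d. (?P j / q j) * (?P k / q k) * ?C j k) \<le> c * (1 + sqrt (c / g)) / real T" .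
  have "(\<Sum>j<d. \<Sum>k<d. (?C j k)^2 / (q j * q k)) \<le> 2 * (\<Sum>j<d. (?P j / q j)^2) / (real T)^2"
    by (rule freq_cov_sq_le[OF assms(1)])
  also have "\<dots> \<le> 2 * (2 * real d + 2 * (c / g)) / (real T)^2"
    unfolding c_def by (intro divide_right_mono mult_left_mono sum_ratio_sq_le_chi2 assms(4,5)) simp_all
  finally show ?thesis
    unfolding variance using linear_part by simp
qed

lemma sample_size_variance_bound:
  fixes d T \<theta> g c K :: real
  assumes "1 \<le> K" "1 \<le> d" "0 < \<theta>" "0 < g" "0 \<le> c"
    and T_dim: "K * sqrt d / \<theta> \<le> T" and T_min: "K / sqrt (\<theta> * g) \<le> T"
  shows "2 * (c * (1 + sqrt (c / g))) / T + 2 * (2 * d + 2 * (c / g)) / T^2 \<le> 4 * (c + \<theta>)^2 / K"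
proof -
  have T_dim': "K * sqrt d \<le> T * \<theta>" using T_dim assms(3) by (simp add: pos_divide_le_eq)
  have "0 < sqrt (\<theta> * g)" using assms(3,4) by simp
  then have T_min': "K \<le> T * sqrt (\<theta> * g)" using T_min by (simp add: pos_divide_le_eq)
  have "K \<le> K * sqrt d" using assms(1,2) by (simp add: mult_le_cancel_left1)
  then have T_pos: "0 < T" and K_le: "K \<le> T * \<theta>"
    using T_dim' assms(1,3) by (smt (verit) mult_nonpos_nonneg)+
  have "2 * c / T = 2 * c * \<theta> / (T * \<theta>)" using assms(3) by simp
  also have "\<dots> \<le> 2 * c * \<theta> / K" using K_le assms by (intro divide_left_mono) auto
  finally have term1: "2 * c / T \<le> 2 * c * \<theta> / K" .
  have "sqrt (c / g) / T = sqrt (c * \<theta>) / (T * sqrt (\<theta> * g))"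
    using assms(3,4) by (simp add: real_sqrt_mult real_sqrt_divide field_simps)
  also have "\<dots> \<le> sqrt (c * \<theta>) / K"
    using T_min' assms(1,3,5) by (intro divide_left_mono) auto
  also have "\<dots> \<le> (c + \<theta>) / 2 / K"
    using arith_geo_mean_sqrt[of c \<theta>] assms(1,3,5) by (intro divide_right_mono) auto
  finally have "2 * c * (sqrt (c / g) / T) \<le> 2 * c * ((c + \<theta>) / 2 / K)"
    using assms(5) by (intro mult_left_mono) auto
  then have term2: "2 * c * sqrt (c / g) / T \<le> c * (c + \<theta>) / K"
    by simp
  have "(K * sqrt d)^2 \<le> (T * \<theta>)^2" using T_dim' assms(1,2) by (intro power_mono) auto
  then have term3: "d / T^2 \<le> \<theta>^2 / K^2"
    using assms(1,2) T_pos by (simp add: field_simps power_mult_distrib)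
  have "K^2 \<le> (T * sqrt (\<theta> * g))^2" using T_min' assms(1) by (intro power_mono) auto
  then have "K^2 \<le> T^2 * (\<theta> * g)" using assms(3,4) by (simp add: power_mult_distrib)
  then have "c * K^2 \<le> c * (T^2 * (\<theta> * g))" using assms(5) by (rule mult_left_mono)
  then have term4: "c / g / T^2 \<le> c * \<theta> / K^2"
    using assms(1,4) T_pos by (simp add: field_simps)
  have K_sq: "\<theta>^2 / K^2 \<le> \<theta>^2 / K" "c * \<theta> / K^2 \<le> c * \<theta> / K"
    using assms(1,3,5) by (auto intro!: divide_left_mono simp: power2_eq_square)
  have "2 * (c * (1 + sqrt (c / g))) / T + 2 * (2 * d + 2 * (c / g)) / T^2
      = 2 * c / T + 2 * c * sqrt (c / g) / T + 4 * (d / T^2) + 4 * (c / g / T^2)"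
    by (simp add: add_divide_distrib algebra_simps)
  also have "\<dots> \<le> 2 * c * \<theta> / K + c * (c + \<theta>) / K + 4 * (\<theta>^2 / K) + 4 * (c * \<theta> / K)"
    using term1 term2 term3 term4 K_sq by linarith
  also have "\<dots> \<le> 4 * (c + \<theta>)^2 / K"
    using assms(1,3,5) by (simp add: field_simps power2_eq_square)
  finally show ?thesis .
qed

lemma collision_stat_variance_le_sample_size:
  fixes K \<theta> :: real
  assumes p: "\<forall>t<T. is_dist d (p t)" and q: "is_dist d q" "\<forall>j<d. g \<le> q j" "0 < g"
    and "0 < \<theta>" "1 \<le> K" and T: "K * sqrt d / \<theta> \<le> T" "K / sqrt (\<theta> * g) \<le> T"
  defines "c \<equiv> chi2 d (p_avg T p) q"
  shows "expect_pair d T p (\<lambda>x y. (collision_stat d T q x y - (1 + c))^2) \<le> 4 * (c + \<theta>)^2 / K"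
proof -
  have "0 < d" using q(1) by (rule is_dist_dim_pos)
  then have "0 < K * sqrt d / \<theta>" using assms(5,6) by simp
  then have "0 < T" using T(1) by linarith
  have "0 \<le> c"
    unfolding c_def using q(2,3) by (intro chi2_nonneg) (auto intro: order.trans[OF less_imp_le])
  have "expect_pair d T p (\<lambda>x y. (collision_stat d T q x y - (1 + c))^2)
      \<le> 2 * (c * (1 + sqrt (c / g))) / real T + 2 * (2 * real d + 2 * (c / g)) / (real T)^2"
    unfolding c_def using p \<open>0 < T\<close> q by (rule collision_stat_variance_le)
  also have "\<dots> \<le> 4 * (c + \<theta>)^2 / K"
    using \<open>0 < d\<close> \<open>0 \<le> c\<close> assms(4-8) by (intro sample_size_variance_bound) auto
  finally show ?thesis .
qed

section \<open>The tester\<close>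

definition batch :: "nat \<Rightarrow> nat \<Rightarrow> (nat \<Rightarrow> nat \<Rightarrow> nat) \<Rightarrow> nat \<Rightarrow> nat" where
  "batch T i s = (\<lambda>t\<in>{..<T}. s t i)"

lemma sample_prob_two_batches:
  "sample_prob T 2 p s = (\<Prod>t<T. p t (batch T 0 s t)) * (\<Prod>t<T. p t (batch T 1 s t))"
  by (simp add: sample_prob_def batch_def numeral_2_eq_2 lessThan_Suc prod.distrib)

lemma sum_sample_space_two_batches:
  "(\<Sum>s\<in>sample_space d T 2. G (batch T 0 s) (batch T 1 s))
     = (\<Sum>x\<in>{..<T} \<rightarrow>\<^sub>E {..<d}. \<Sum>y\<in>{..<T} \<rightarrow>\<^sub>E {..<d}. G x y)"
proof -
  let ?X = "{..<T} \<rightarrow>\<^sub>E {..<d}"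
  let ?merge = "\<lambda>(x, y). \<lambda>t\<in>{..<T}. \<lambda>i\<in>{..<2::nat}. if i = 0 then x t else y t"
  have "(\<Sum>s\<in>sample_space d T 2. G (batch T 0 s) (batch T 1 s)) = (\<Sum>(x, y)\<in>?X \<times> ?X. G x y)"
  proof (rule sum.reindex_bij_witness[where i = ?merge and j = "\<lambda>s. (batch T 0 s, batch T 1 s)"])
    fix s assume s: "s \<in> sample_space d T 2"
    show "?merge (batch T 0 s, batch T 1 s) = s"
    proof
      fix t
      show "?merge (batch T 0 s, batch T 1 s) t = s t"
      proof (cases "t < T")
        case True
        then have "s t \<in> {..<2} \<rightarrow>\<^sub>E {..<d}"
          using s by (auto simp: sample_space_def)
        then show ?thesis
          using True by (auto simp: batch_def PiE_iff extensional_def less_2_cases_iff)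
      next
        case False
        then show ?thesis
          using s by (auto simp: sample_space_def PiE_iff extensional_def)
      qed
    qed
    show "(batch T 0 s, batch T 1 s) \<in> ?X \<times> ?X"
      using s by (auto simp: sample_space_def batch_def PiE_iff)
  next
    fix xy assume "xy \<in> ?X \<times> ?X"
    then obtain x y where xy: "xy = (x, y)" and x: "x \<in> ?X" and y: "y \<in> ?X" by blast
    have "batch T 0 (?merge xy) t = x t" "batch T 1 (?merge xy) t = y t" for t
      using PiE_arb[OF x, of t] PiE_arb[OF y, of t] by (simp_all add: xy batch_def)
    then show "(batch T 0 (?merge xy), batch T 1 (?merge xy)) = xy"
      by (simp add: xy fun_eq_iff)
    show "?merge xy \<in> sample_space d T 2"
      using x y by (simp add: xy sample_space_def restrict_PiE_iff PiE_iff)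
  qed simp
  then show ?thesis by (simp add: sum.cartesian_product)
qed

lemma accept_prob_two_batches:
  "accept_prob d T 2 p (\<lambda>s. F (batch T 0 s) (batch T 1 s)) = expect_pair d T p F"
proof -
  let ?w = "\<lambda>x. \<Prod>t<T. p t (x t)"
  have "accept_prob d T 2 p (\<lambda>s. F (batch T 0 s) (batch T 1 s))
      = (\<Sum>s\<in>sample_space d T 2. (\<lambda>x y. ?w x * ?w y * F x y) (batch T 0 s) (batch T 1 s))"
    unfolding accept_prob_def sample_prob_two_batches by simp
  also have "\<dots> = (\<Sum>x\<in>{..<T} \<rightarrow>\<^sub>E {..<d}. \<Sum>y\<in>{..<T} \<rightarrow>\<^sub>E {..<d}. ?w x * ?w y * F x y)"
    by (rule sum_sample_space_two_batches)
  also have "\<dots> = expect_pair d T p F"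
    by (simp add: expect_pair_def expect_draw_def sum_distrib_left mult_ac)
  finally show ?thesis .
qed

definition chi2_tester :: "nat \<Rightarrow> nat \<Rightarrow> (nat \<Rightarrow> real) \<Rightarrow> real \<Rightarrow> (nat \<Rightarrow> nat \<Rightarrow> nat) \<Rightarrow> real" where
  "chi2_tester d T q \<theta> s = of_bool (collision_stat d T q (batch T 0 s) (batch T 1 s) \<le> 1 + 0.995 * \<theta>)"

lemma chi2_tester_error_le:
  fixes K \<theta> :: real
  assumes p: "\<forall>t<T. is_dist d (p t)" and q: "is_dist d q" "\<forall>j<d. g \<le> q j" "0 < g"
    and "0 < \<theta>" "1 \<le> K" and "K * sqrt d / \<theta> \<le> T" "K / sqrt (\<theta> * g) \<le> T"
  shows "chi2 d (p_avg T p) q \<le> 0.99 * \<theta> \<Longrightarrow> 1 - accept_prob d T 2 p (chi2_tester d T q \<theta>) \<le> 640000 / K"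
    and "\<theta> < chi2 d (p_avg T p) q \<Longrightarrow> accept_prob d T 2 p (chi2_tester d T q \<theta>) \<le> 640000 / K"
proof -
  define c where "c = chi2 d (p_avg T p) q"
  define Z where "Z = collision_stat d T q"
  \<comment> \<open>in either case the threshold is at distance at least \<open>a\<close> from the mean \<open>1 + c\<close>\<close>
  define a where "a = 0.005 * max \<theta> c"
  have "0 \<le> c"
    unfolding c_def using q(2,3) by (intro chi2_nonneg) (auto intro: order.trans[OF less_imp_le])
  have "0 < a" using \<open>0 < \<theta>\<close> by (simp add: a_def)
  have "expect_pair d T p (\<lambda>x y. (Z x y - (1 + c))^2) \<le> 4 * (c + \<theta>)^2 / K"
    unfolding Z_def c_def using assms by (rule collision_stat_variance_le_sample_size)
  also have "\<dots> \<le> 640000 * a^2 / K"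
  proof -
    have "(c + \<theta>)^2 \<le> (400 * a)^2"
      using \<open>0 \<le> c\<close> \<open>0 < \<theta>\<close> by (intro power_mono) (auto simp: a_def)
    then show ?thesis using assms(6) by (intro divide_right_mono) (auto simp: power_mult_distrib)
  qed
  finally have variance: "expect_pair d T p (\<lambda>x y. (Z x y - (1 + c))^2) / a^2 \<le> 640000 / K"
    using \<open>0 < a\<close> by (simp add: field_simps)
  have accept: "accept_prob d T 2 p (chi2_tester d T q \<theta>) = expect_pair d T p (\<lambda>x y. of_bool (Z x y \<le> 1 + 0.995 * \<theta>))"
    unfolding chi2_tester_def Z_def by (rule accept_prob_two_batches)
  show "1 - accept_prob d T 2 p (chi2_tester d T q \<theta>) \<le> 640000 / K" if "chi2 d (p_avg T p) q \<le> 0.99 * \<theta>"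
  proof -
    have "a = 0.005 * \<theta>" using that \<open>0 < \<theta>\<close> by (simp add: a_def c_def)
    then have "expect_pair d T p (\<lambda>x y. of_bool (\<not> Z x y \<le> 1 + 0.995 * \<theta>))
        \<le> expect_pair d T p (\<lambda>x y. (Z x y - (1 + c))^2) / a^2"
      using that by (intro expect_pair_chebyshev[OF p \<open>0 < a\<close>]) (simp add: c_def)
    then show ?thesis
      unfolding accept expect_pair_of_bool_not[OF p] using variance by linarith
  qed
  show "accept_prob d T 2 p (chi2_tester d T q \<theta>) \<le> 640000 / K" if "\<theta> < chi2 d (p_avg T p) q"
  proof -
    have "a = 0.005 * c" using that by (simp add: a_def c_def)
    then have "expect_pair d T p (\<lambda>x y. of_bool (Z x y \<le> 1 + 0.995 * \<theta>))
        \<le> expect_pair d T p (\<lambda>x y. (Z x y - (1 + c))^2) / a^2"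
      using that \<open>0 < \<theta>\<close> by (intro expect_pair_chebyshev[OF p \<open>0 < a\<close>]) (simp add: c_def)
    then show ?thesis
      unfolding accept using variance by linarith
  qed
qed

theorem theorem2p2:
  shows "\<exists>K::real>0. \<forall>(d::nat) (q::nat \<Rightarrow> real) (\<theta>::real) (T::nat).
     is_dist d q \<and> (\<forall>j<d. 0 < q j) \<and> 0 < \<theta> \<and>
     real T \<ge> K * max (sqrt (real d) / \<theta>) (1 / sqrt (\<theta> * Min (q ` {..<d})))
     \<longrightarrow> (\<exists>A :: (nat \<Rightarrow> nat \<Rightarrow> nat) \<Rightarrow> real.
            (\<forall>s. 0 \<le> A s \<and> A s \<le> 1) \<and>
            (\<forall>p :: nat \<Rightarrow> nat \<Rightarrow> real. (\<forall>t<T. is_dist d (p t)) \<longrightarrow>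
               (chi2 d (p_avg T p) q \<le> 0.99 * \<theta> \<longrightarrow> accept_prob d T 2 p A \<ge> 0.99) \<and>
               (chi2 d (p_avg T p) q > \<theta> \<longrightarrow> 1 - accept_prob d T 2 p A \<ge> 0.99)))"
proof (intro exI[of _ "10^8"] conjI allI impI)
  fix d q \<theta> T
  assume "is_dist d q \<and> (\<forall>j<d. 0 < q j) \<and> 0 < \<theta> \<and>
    real T \<ge> 10^8 * max (sqrt (real d) / \<theta>) (1 / sqrt (\<theta> * Min (q ` {..<d})))"
  then have q: "is_dist d q" "\<forall>j<d. 0 < q j" and "0 < \<theta>"
    and T: "10^8 * sqrt d / \<theta> \<le> T" "10^8 / sqrt (\<theta> * Min (q ` {..<d})) \<le> T"
    by (auto simp: max_def split: if_splits)
  have "0 < d" using q(1) by (rule is_dist_dim_pos)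
  then have min_q: "\<forall>j<d. Min (q ` {..<d}) \<le> q j" "0 < Min (q ` {..<d})"
    using q(2) by auto (subst Min_gr_iff; auto)
  have "(1::real) \<le> 10^8" by simp
  note error = chi2_tester_error_le[OF _ q(1) min_q \<open>0 < \<theta>\<close> this T]
  show "\<exists>A. (\<forall>s. 0 \<le> A s \<and> A s \<le> 1) \<and>
      (\<forall>p. (\<forall>t<T. is_dist d (p t)) \<longrightarrow>
        (chi2 d (p_avg T p) q \<le> 0.99 * \<theta> \<longrightarrow> accept_prob d T 2 p A \<ge> 0.99) \<and>
        (chi2 d (p_avg T p) q > \<theta> \<longrightarrow> 1 - accept_prob d T 2 p A \<ge> 0.99))"
    using error by (intro exI[of _ "chi2_tester d T q \<theta>"]) (fastforce simp: chi2_tester_def)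
qed simp

end
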